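(* For any $i\in I$, we have: \begin{enumerate} \item[(i)] $\mathcal{D}\circ T_i=T_i\circ\mathcal{D}$; \item[(ii)] $T_i^{-1}=*\circ T_i\circ *$; \item[(iii)] $\sigma\circ T_i=T_{\sigma(i)}\circ\sigma$ for any Dynkin diagram automorphism $\sigma$ of $\mathfrak{g}$; \item[(iv)] $T_i\circ\overline{\phantom{x}}=\overline{\phantom{x}}\circ T_i$. \end{enumerate}
   Context: Let $\mathsf{C}=(c_{i,j})_{i,j\in I}$ be a finite-type Cartan matrix of $\mathfrak{g}$, $(\alpha_i,\alpha_j)=\mathsf{d}_ic_{i,j}$ ($\min\mathsf{d}_i=1$), $q_i=q^{\mathsf{d}_i}$, $\mathbf{k}=\mathbb{Q}(q^{1/2})$. $\widehat{\mathcal{A}}$ is the bosonic extension generated by $f_{i,p}$ ($i\in I,p\in\mathbb{Z}$) with quantum Serre relations among $\{f_{i,p}\}_{i\in I}$ for fixed $p$, $f_{i,m}f_{j,p}=q_i^{(-1)^{p-m+1}c_{i,j}}f_{j,p}f_{i,m}$ ($p>m+1$), $f_{i,p}f_{j,p+1}=q_i^{c_{i,j}}f_{j,p+1}f_{i,p}+\delta_{i,j}(1-q_i^2)$. On $\widehat{\mathcal{A}}$: $*$ is the $\mathbf{k}$-algebra anti-automorphism $f_{i,p}\mapsto f_{i,-p}$; $\sigma$ (for a diagram automorphism) is the algebra automorphism $f_{i,p}\mapsto f_{\sigma(i),p}$; $\overline{\phantom{x}}$ is the $\mathbb{Q}$-algebra anti-automorphism with $\overline{f_{i,p}}=f_{i,p}$,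 $\overline{q^{1/2}}=q^{-1/2}$; $\mathcal{D}$ is the algebra automorphism $f_{i,p}\mapsto f_{i,p+1}$. $T_i$ is the automorphism with $T_i(f_{j,p})=f_{j,p+\delta_{i,j}}$ if $c_{i,j}\ge0$ and $T_i(f_{j,p})=\kappa_i^{c_{i,j}}\sum_{r+s=-c_{i,j}}(-1)^rq_i^rf_{i,p}^{(s)}f_{j,p}f_{i,p}^{(r)}$ if $c_{i,j}<0$, where $\kappa_i=q_i^{1/2}(q_i^{-1}-q_i)$, $f^{(n)}=f^n/[n]_i!$; its inverse is $T_i^{-1}(f_{j,p})=f_{j,p-\delta_{i,j}}$ if $c_{i,j}\ge0$ and $\kappa_i^{c_{i,j}}\sum_{r+s=-c_{i,j}}(-1)^rq_i^rf_{i,p}^{(r)}f_{j,p}f_{i,p}^{(s)}$ if $c_{i,j}<0$. *)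

theory Defs
  imports "HOL-Library.Poly_Mapping" "HOL-Computational_Algebra.Polynomial"
          "HOL-Computational_Algebra.Fraction_Field"
begin

text \<open>k is the field of rational functions over Q in the variable v = q^(1/2).\<close>
type_synonym K = "rat poly fract"

definition vv :: K where "vv = Fract [:0, 1:] 1"

definition pbar :: "rat poly \<Rightarrow> K" where
  "pbar p = poly (map_poly (\<lambda>c. Fract [:c:] 1) p) (inverse vv)"

definition barK :: "K \<Rightarrow> K" where
  "barK x = (THE y. \<forall>a b. b \<noteq> 0 \<longrightarrow> x = Fract a b \<longrightarrow> y = pbar a / pbar b)"

text \<open>Finite-type (indecomposable, i.e. g simple) Cartan matrix with symmetrizer d,
  (alpha_i, alpha_j) = d_i c_ij, min d_i = 1. Index set I = UNIV of a finite type.\<close>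
definition finite_type_cartan :: "('i::finite \<Rightarrow> 'i \<Rightarrow> int) \<Rightarrow> ('i \<Rightarrow> nat) \<Rightarrow> bool" where
  "finite_type_cartan C d \<longleftrightarrow>
     (\<forall>i. C i i = 2) \<and> (\<forall>i j. i \<noteq> j \<longrightarrow> C i j \<le> 0) \<and>
     (\<forall>i. d i > 0) \<and> (\<exists>i. d i = 1) \<and>
     (\<forall>i j. int (d i) * C i j = int (d j) * C j i) \<and>
     (\<forall>x :: 'i \<Rightarrow> real. x \<noteq> (\<lambda>_. 0) \<longrightarrow>
        (\<Sum>i\<in>UNIV. \<Sum>j\<in>UNIV. real (d i) * real_of_int (C i j) * x i * x j) > 0) \<and>
     (\<forall>J. J \<noteq> {} \<and> J \<noteq> UNIV \<longrightarrow> (\<exists>i\<in>J. \<exists>j. j \<notin> J \<and> C i j \<noteq> 0))"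

definition diagram_automorphism :: "('i \<Rightarrow> 'i \<Rightarrow> int) \<Rightarrow> ('i \<Rightarrow> 'i) \<Rightarrow> bool" where
  "diagram_automorphism C \<sigma> \<longleftrightarrow> bij \<sigma> \<and> (\<forall>i j. C (\<sigma> i) (\<sigma> j) = C i j)"

text \<open>q_i = q^(d_i) = v^(2 d_i); integer powers of q_i.\<close>
definition qi :: "('i \<Rightarrow> nat) \<Rightarrow> 'i \<Rightarrow> K" where "qi d i = vv ^ (2 * d i)"
definition qpow :: "('i \<Rightarrow> nat) \<Rightarrow> 'i \<Rightarrow> int \<Rightarrow> K" where "qpow d i n = qi d i powi n"

definition qint :: "('i \<Rightarrow> nat) \<Rightarrow> 'i \<Rightarrow> nat \<Rightarrow> K" where
  "qint d i n = (qi d i ^ n - inverse (qi d i) ^ n) / (qi d i - inverse (qi d i))"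
definition qfact :: "('i \<Rightarrow> nat) \<Rightarrow> 'i \<Rightarrow> nat \<Rightarrow> K" where
  "qfact d i n = (\<Prod>k\<in>{1..n}. qint d i k)"

definition kappa :: "('i \<Rightarrow> nat) \<Rightarrow> 'i \<Rightarrow> K" where
  "kappa d i = vv ^ d i * (inverse (qi d i) - qi d i)"

text \<open>Finite k-linear combinations of words in the letters (i,p).\<close>
type_synonym 'i FA = "('i \<times> int) list \<Rightarrow>\<^sub>0 K"

definition fa_mult :: "'i FA \<Rightarrow> 'i FA \<Rightarrow> 'i FA" where
  "fa_mult x y = (\<Sum>u\<in>Poly_Mapping.keys x. \<Sum>w\<in>Poly_Mapping.keys y.
       Poly_Mapping.single (u @ w) (Poly_Mapping.lookup x u * Poly_Mapping.lookup y w))"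

definition fa_one :: "'i FA" where "fa_one = Poly_Mapping.single [] 1"

definition fa_scal :: "K \<Rightarrow> 'i FA \<Rightarrow> 'i FA" where
  "fa_scal c x = (\<Sum>u\<in>Poly_Mapping.keys x. Poly_Mapping.single u (c * Poly_Mapping.lookup x u))"

definition gen :: "'i \<Rightarrow> int \<Rightarrow> 'i FA" where
  "gen i p = Poly_Mapping.single [(i, p)] 1"

definition fa_pow :: "'i FA \<Rightarrow> nat \<Rightarrow> 'i FA" where
  "fa_pow x n = (fa_mult x ^^ n) fa_one"

definition divpow :: "('i \<Rightarrow> nat) \<Rightarrow> 'i \<Rightarrow> 'i FA \<Rightarrow> nat \<Rightarrow> 'i FA" where
  "divpow d i x n = fa_scal (inverse (qfact d i n)) (fa_pow x n)"

definition wimg :: "('i \<times> int \<Rightarrow> 'i FA) \<Rightarrow> ('i \<times> int) list \<Rightarrow> 'i FA" where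
  "wimg g w = foldr (\<lambda>a acc. fa_mult (g a) acc) w fa_one"

definition hom_ext :: "('i \<times> int \<Rightarrow> 'i FA) \<Rightarrow> 'i FA \<Rightarrow> 'i FA" where
  "hom_ext g x = (\<Sum>w\<in>Poly_Mapping.keys x. fa_scal (Poly_Mapping.lookup x w) (wimg g w))"

definition antihom_ext :: "('i \<times> int \<Rightarrow> 'i FA) \<Rightarrow> 'i FA \<Rightarrow> 'i FA" where
  "antihom_ext g x = (\<Sum>w\<in>Poly_Mapping.keys x. fa_scal (Poly_Mapping.lookup x w) (wimg g (rev w)))"

definition bos_rels :: "('i \<Rightarrow> 'i \<Rightarrow> int) \<Rightarrow> ('i \<Rightarrow> nat) \<Rightarrow> 'i FA set" where
  "bos_rels C d =
     {(\<Sum>r\<in>{0..nat (1 - C i j)}. fa_scal ((-1) ^ r)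
          (fa_mult (divpow d i (gen i p) r)
             (fa_mult (gen j p) (divpow d i (gen i p) (nat (1 - C i j) - r)))))
       | i j p. i \<noteq> j}
   \<union> {fa_mult (gen i m) (gen j p)
        - fa_scal (qpow d i ((-1) ^ nat (p - m + 1) * C i j)) (fa_mult (gen j p) (gen i m))
       | i j m p. p > m + 1}
   \<union> {fa_mult (gen i p) (gen j (p + 1))
        - fa_scal (qpow d i (C i j)) (fa_mult (gen j (p + 1)) (gen i p))
        - (if i = j then fa_scal (1 - qi d i ^ 2) fa_one else 0)
       | i j p. True}"

inductive_set fa_ideal :: "'i FA set \<Rightarrow> 'i FA set" for R where
  gen_in: "r \<in> R \<Longrightarrow> r \<in> fa_ideal R"
| zero_in: "0 \<in> fa_ideal R"
| add_in: "x \<in> fa_ideal R \<Longrightarrow> y \<in> fa_ideal R \<Longrightarrow> x + y \<in> fa_ideal R"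
| mult_in: "x \<in> fa_ideal R \<Longrightarrow> fa_mult a (fa_mult x b) \<in> fa_ideal R"

text \<open>Equality in the bosonic extension A-hat = free algebra / ideal.\<close>
definition bos_eq :: "('i \<Rightarrow> 'i \<Rightarrow> int) \<Rightarrow> ('i \<Rightarrow> nat) \<Rightarrow> 'i FA \<Rightarrow> 'i FA \<Rightarrow> bool" where
  "bos_eq C d x y \<longleftrightarrow> x - y \<in> fa_ideal (bos_rels C d)"

definition Dmap :: "'i FA \<Rightarrow> 'i FA" where
  "Dmap = hom_ext (\<lambda>(j, p). gen j (p + 1))"

definition starmap :: "'i FA \<Rightarrow> 'i FA" where
  "starmap = antihom_ext (\<lambda>(j, p). gen j (- p))"

definition sigmamap :: "('i \<Rightarrow> 'i) \<Rightarrow> 'i FA \<Rightarrow> 'i FA" where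
  "sigmamap \<sigma> = hom_ext (\<lambda>(j, p). gen (\<sigma> j) p)"

definition barmap :: "'i FA \<Rightarrow> 'i FA" where
  "barmap x = (\<Sum>w\<in>Poly_Mapping.keys x. fa_scal (barK (Poly_Mapping.lookup x w)) (wimg (\<lambda>(j, p). gen j p) (rev w)))"

definition Tgen :: "('i \<Rightarrow> 'i \<Rightarrow> int) \<Rightarrow> ('i \<Rightarrow> nat) \<Rightarrow> 'i \<Rightarrow> 'i \<times> int \<Rightarrow> 'i FA" where
  "Tgen C d i = (\<lambda>(j, p).
     if C i j \<ge> 0 then gen j (p + (if i = j then 1 else 0))
     else fa_scal (kappa d i powi C i j)
       (\<Sum>r\<in>{0..nat (- C i j)}. fa_scal ((-1) ^ r * qi d i ^ r)
          (fa_mult (divpow d i (gen i p) (nat (- C i j) - r))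
             (fa_mult (gen j p) (divpow d i (gen i p) r)))))"

definition Tinvgen :: "('i \<Rightarrow> 'i \<Rightarrow> int) \<Rightarrow> ('i \<Rightarrow> nat) \<Rightarrow> 'i \<Rightarrow> 'i \<times> int \<Rightarrow> 'i FA" where
  "Tinvgen C d i = (\<lambda>(j, p).
     if C i j \<ge> 0 then gen j (p - (if i = j then 1 else 0))
     else fa_scal (kappa d i powi C i j)
       (\<Sum>r\<in>{0..nat (- C i j)}. fa_scal ((-1) ^ r * qi d i ^ r)
          (fa_mult (divpow d i (gen i p) r)
             (fa_mult (gen j p) (divpow d i (gen i p) (nat (- C i j) - r))))))"

definition Tmap :: "('i \<Rightarrow> 'i \<Rightarrow> int) \<Rightarrow> ('i \<Rightarrow> nat) \<Rightarrow> 'i \<Rightarrow> 'i FA \<Rightarrow> 'i FA" where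
  "Tmap C d i = hom_ext (Tgen C d i)"

definition Tinvmap :: "('i \<Rightarrow> 'i \<Rightarrow> int) \<Rightarrow> ('i \<Rightarrow> nat) \<Rightarrow> 'i \<Rightarrow> 'i FA \<Rightarrow> 'i FA" where
  "Tinvmap C d i = hom_ext (Tinvgen C d i)"

end

theory Submission
  imports Defs
begin

text \<open>
  On the free algebra, each of the maps \<open>D\<close>, \<open>*\<close>, \<open>\<sigma>\<close>, bar and \<open>T\<^sub>i\<close> is the unique
  semilinear (anti-)homomorphism with prescribed values on the generators \<open>f\<^sub>j\<^sub>,\<^sub>p\<close>, and a
  composite of such maps is again of this kind. So every identity reduces to a check on
  generators, where it already holds in the free algebra, before passing to the quotient.
  For (i) and (ii) this check is immediate, \<open>*\<close> reversing the products in \<open>T\<^sub>i(f\<^sub>j\<^sub>,\<^sub>p)\<close>.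
  For (iii), the symmetrizer of an indecomposable Cartan matrix is unique up to a scalar, so
  \<open>min d = 1\<close> forces \<open>d \<circ> \<sigma> = d\<close>. For (iv), with \<open>n = -c\<^sub>i\<^sub>j\<close>, bar reverses the products
  and the sum over \<open>r\<close>, and the factor \<open>(-1)\<^sup>n q\<^sub>i\<^sup>n\<close> in \<open>bar(\<kappa>\<^sub>i\<^sup>-\<^sup>n) = (-1)\<^sup>n q\<^sub>i\<^sup>n \<kappa>\<^sub>i\<^sup>-\<^sup>n\<close> turns
  the reversed coefficients \<open>(-1)\<^sup>n\<^sup>-\<^sup>r q\<^sub>i\<^sup>r\<^sup>-\<^sup>n\<close> back into \<open>(-1)\<^sup>r q\<^sub>i\<^sup>r\<close>.
\<close>

section \<open>The bar involution of k\<close>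

definition const_K :: "rat \<Rightarrow> K" where "const_K c = Fract [:c:] 1"

lemma const_K_add: "const_K (a + b) = const_K a + const_K b"
  and const_K_mult: "const_K (a * b) = const_K a * const_K b"
  and const_K_0 [simp]: "const_K 0 = 0"
  by (simp_all add: const_K_def mult.commute Zero_fract_def)

lemma pbar_0 [simp]: "pbar 0 = 0"
  by (simp add: pbar_def)

lemma pbar_pCons: "pbar (pCons a p) = const_K a + inverse vv * pbar p"
  unfolding pbar_def const_K_def[symmetric] by (simp add: map_poly_pCons)

lemma pbar_1: "pbar 1 = 1"
  using pbar_pCons[of 1 0] by (simp add: const_K_def One_fract_def one_pCons)

lemma pbar_add: "pbar (p + q) = pbar p + pbar q"
proof (induction p q rule: poly_induct2)
  case (pCons a p b q)
  then show ?case by (simp add: pbar_pCons const_K_add algebra_simps)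
qed simp

lemma pbar_smult: "pbar (smult a p) = const_K a * pbar p"
  by (induction p) (simp_all add: pbar_pCons const_K_mult algebra_simps)

lemma pbar_mult: "pbar (p * q) = pbar p * pbar q"
  by (induction p) (simp_all add: pbar_pCons pbar_add pbar_smult algebra_simps)

lemma vv_nonzero: "vv \<noteq> 0"
  by (simp add: vv_def eq_fract Zero_fract_def)

lemma vv_power: "vv ^ m = Fract (monom 1 m) 1"
  by (induction m) (simp_all add: vv_def One_fract_def monom_Suc monom_0 pCons_one)

lemma const_K_mult_vv_power: "const_K a * vv ^ m = Fract (monom a m) 1"
  by (simp add: vv_power const_K_def smult_monom)

lemma power_degree_mult_pbar: "vv ^ degree p * pbar p = Fract (reflect_poly p) 1"
proof (induction p)
  case (pCons a p)
  show ?case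
  proof (cases "p = 0")
    case True
    then show ?thesis using pbar_pCons[of a 0] by (simp add: const_K_def)
  next
    case False
    have "vv ^ degree (pCons a p) * pbar (pCons a p)
        = const_K a * vv ^ Suc (degree p) + vv ^ degree p * pbar p"
      using False vv_nonzero by (simp add: pbar_pCons algebra_simps)
    also have "\<dots> = Fract (reflect_poly (pCons a p)) 1"
      using False pCons.IH const_K_mult_vv_power[of a "Suc (degree p)"]
      by (simp add: reflect_poly_pCons' add.commute)
    finally show ?thesis .
  qed
qed (simp add: Zero_fract_def)

lemma pbar_nonzero: "p \<noteq> 0 \<Longrightarrow> pbar p \<noteq> 0"
proof
  assume "p \<noteq> 0" "pbar p = 0"
  then have "Fract (reflect_poly p) 1 = 0"
    using power_degree_mult_pbar[of p] by simp
  then have "reflect_poly p = 0"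
    by (simp add: Zero_fract_def eq_fract)
  with \<open>p \<noteq> 0\<close> show False
    by (metis coeff_0_reflect_poly_0_iff coeff_0)
qed

lemma barK_Fract:
  assumes "b \<noteq> 0"
  shows "barK (Fract a b) = pbar a / pbar b"
  unfolding barK_def
proof (rule the_equality)
  show "\<forall>a' b'. b' \<noteq> 0 \<longrightarrow> Fract a b = Fract a' b' \<longrightarrow> pbar a / pbar b = pbar a' / pbar b'"
  proof (intro allI impI)
    fix a' b' :: "rat poly"
    assume "b' \<noteq> 0" "Fract a b = Fract a' b'"
    then have "a * b' = a' * b"
      using assms by (simp add: eq_fract)
    then have "pbar a * pbar b' = pbar a' * pbar b"
      by (metis pbar_mult)
    then show "pbar a / pbar b = pbar a' / pbar b'"
      using pbar_nonzero[OF assms] pbar_nonzero[OF \<open>b' \<noteq> 0\<close>] by (simp add: divide_simps)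
  qed
qed (use assms in blast)

lemma barK_add: "barK (x + y) = barK x + barK y"
proof (cases x; cases y)
  fix a b c e assume "x = Fract a b" "b \<noteq> 0" "y = Fract c e" "e \<noteq> 0"
  then show ?thesis using pbar_nonzero[of b] pbar_nonzero[of e]
    by (simp add: barK_Fract pbar_add pbar_mult divide_simps algebra_simps)
qed

lemma barK_mult: "barK (x * y) = barK x * barK y"
proof (cases x; cases y)
  fix a b c e assume "x = Fract a b" "b \<noteq> 0" "y = Fract c e" "e \<noteq> 0"
  then show ?thesis using pbar_nonzero[of b] pbar_nonzero[of e]
    by (simp add: barK_Fract pbar_mult)
qed

lemma barK_1 [simp]: "barK 1 = 1"
  by (simp add: One_fract_def barK_Fract pbar_1)

lemma barK_0 [simp]: "barK 0 = 0"
  by (simp add: Zero_fract_def barK_Fract pbar_1)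

lemma barK_vv: "barK vv = inverse vv"
  using pbar_pCons[of 0 1] by (simp add: vv_def barK_Fract pbar_1 pCons_one)

lemma barK_minus: "barK (- x) = - barK x"
  by (metis add_eq_0_iff barK_0 barK_add)

lemma barK_diff: "barK (x - y) = barK x - barK y"
  by (metis add_uminus_conv_diff barK_add barK_minus)

lemma barK_inverse: "barK (inverse x) = inverse (barK x)"
proof (cases "x = 0")
  case False
  then have "barK x * barK (inverse x) = 1"
    by (metis barK_1 barK_mult right_inverse)
  then show ?thesis
    by (metis inverse_unique)
qed simp

lemma barK_divide: "barK (x / y) = barK x / barK y"
  by (simp add: divide_inverse barK_mult barK_inverse)

lemma barK_power: "barK (x ^ n) = barK x ^ n"
  by (induction n) (simp_all add: barK_mult)

lemma barK_power_int: "barK (x powi n) = barK x powi n"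
  by (cases "n \<ge> 0") (auto simp: power_int_def barK_power barK_inverse)

lemma barK_prod: "barK (prod f A) = (\<Prod>a\<in>A. barK (f a))"
  by (induction A rule: infinite_finite_induct) (simp_all add: barK_mult)

lemma qi_nonzero: "qi d i \<noteq> 0"
  by (simp add: qi_def vv_nonzero)

lemma barK_qi: "barK (qi d i) = inverse (qi d i)"
  by (simp add: qi_def barK_power barK_vv power_inverse)

lemma barK_qint: "barK (qint d i n) = qint d i n"
  unfolding qint_def
  by (simp add: barK_divide barK_diff barK_power barK_inverse barK_qi)
     (metis minus_diff_eq minus_divide_divide)

lemma barK_inverse_qfact: "barK (inverse (qfact d i n)) = inverse (qfact d i n)"
  by (simp add: barK_inverse qfact_def barK_prod barK_qint)

lemma barK_kappa: "barK (kappa d i) = - inverse (qi d i) * kappa d i"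
proof -
  have qi_split: "qi d i = vv ^ d i * vv ^ d i"
    by (simp add: qi_def power_add[symmetric] mult_2)
  have "barK (kappa d i) = inverse vv ^ d i * (qi d i - inverse (qi d i))"
    by (simp add: kappa_def barK_mult barK_power barK_vv barK_diff barK_inverse barK_qi)
  also have "\<dots> = - inverse (qi d i) * kappa d i"
    unfolding kappa_def qi_split using vv_nonzero by (simp add: field_simps)
  finally show ?thesis .
qed

lemma minus_inverse_power_int_neg: "(- inverse q) powi (- int n) = (-1) ^ n * (q :: 'a :: field) ^ n"
proof -
  have "(- inverse q) powi (- int n) = (- q) ^ n"
    by (simp add: power_int_minus power_inverse flip: inverse_minus_eq)
  also have "\<dots> = (-1) ^ n * q ^ n"
    by (rule power_minus)
  finally show ?thesis .
qed

lemma barK_kappa_power_neg: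
  "barK (kappa d i powi (- int n)) = (-1) ^ n * qi d i ^ n * kappa d i powi (- int n)"
  by (simp only: barK_power_int barK_kappa power_int_mult_distrib minus_inverse_power_int_neg)

section \<open>The free algebra\<close>

lemma poly_mapping_sum_single:
  assumes "finite A" "Poly_Mapping.keys x \<subseteq> A"
  shows "x = (\<Sum>u\<in>A. Poly_Mapping.single u (Poly_Mapping.lookup x u))"
  using assms
  by (intro poly_mapping_eqI)
     (auto simp: lookup_sum lookup_single when_def in_keys_iff sum.delta' split: if_splits)

lemma poly_mapping_single_induct:
  fixes x :: "'a \<Rightarrow>\<^sub>0 'b::comm_monoid_add"
  assumes "P 0" "\<And>k v. P (Poly_Mapping.single k v)" "\<And>x y. P x \<Longrightarrow> P y \<Longrightarrow> P (x + y)"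
  shows "P x"
proof -
  have "P (\<Sum>u\<in>A. Poly_Mapping.single u (Poly_Mapping.lookup x u))" if "finite A" for A
    using that by (induction A rule: finite_induct) (simp_all add: assms)
  then show ?thesis
    using poly_mapping_sum_single[of "Poly_Mapping.keys x" x] by (metis finite_keys order_refl)
qed

lemma lookup_fa_scal [simp]: "Poly_Mapping.lookup (fa_scal c x) u = c * Poly_Mapping.lookup x u"
  unfolding fa_scal_def
  by (simp add: lookup_sum lookup_single when_def in_keys_iff sum.delta' split: if_splits)

lemma fa_scal_add: "fa_scal c (x + y) = fa_scal c x + fa_scal c y"
  and fa_scal_add_left: "fa_scal (a + b) x = fa_scal a x + fa_scal b x"
  and fa_scal_scal [simp]: "fa_scal a (fa_scal b x) = fa_scal (a * b) x"
  and fa_scal_one [simp]: "fa_scal 1 x = x"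
  and fa_scal_0 [simp]: "fa_scal 0 x = 0"
  and fa_scal_zero [simp]: "fa_scal c 0 = 0"
  and fa_scal_single [simp]: "fa_scal c (Poly_Mapping.single u a) = Poly_Mapping.single u (c * a)"
  and fa_scal_sum: "fa_scal c (sum f A) = (\<Sum>a\<in>A. fa_scal c (f a))"
  by (rule poly_mapping_eqI;
      simp add: lookup_add lookup_single lookup_sum when_def sum_distrib_left algebra_simps)+

lemma fa_mult_superset:
  assumes "finite A" "Poly_Mapping.keys x \<subseteq> A" "finite B" "Poly_Mapping.keys y \<subseteq> B"
  shows "fa_mult x y = (\<Sum>u\<in>A. \<Sum>w\<in>B.
           Poly_Mapping.single (u @ w) (Poly_Mapping.lookup x u * Poly_Mapping.lookup y w))"
  unfolding fa_mult_def using assms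
  by (intro sum.mono_neutral_cong_left sum.mono_neutral_right) (auto simp: in_keys_iff)

lemma fa_mult_add_left: "fa_mult (x + y) z = fa_mult x z + fa_mult y z"
  using keys_add[of x y]
  by (simp add: fa_mult_superset[of "Poly_Mapping.keys x \<union> Poly_Mapping.keys y" _ "Poly_Mapping.keys z"]
      lookup_add distrib_right single_add sum.distrib)

lemma fa_mult_add_right: "fa_mult z (x + y) = fa_mult z x + fa_mult z y"
  using keys_add[of x y]
  by (simp add: fa_mult_superset[of "Poly_Mapping.keys z" _ "Poly_Mapping.keys x \<union> Poly_Mapping.keys y"]
      lookup_add distrib_left single_add sum.distrib)

lemma fa_mult_zero_left [simp]: "fa_mult 0 x = 0"
  and fa_mult_zero_right [simp]: "fa_mult x 0 = 0"
  by (simp_all add: fa_mult_def)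

lemma fa_mult_single [simp]:
  "fa_mult (Poly_Mapping.single u a) (Poly_Mapping.single w b) = Poly_Mapping.single (u @ w) (a * b)"
  by (simp add: fa_mult_superset[of "{u}" _ "{w}"])

lemma poly_mapping_single_induct2:
  fixes x :: "'a \<Rightarrow>\<^sub>0 'b::comm_monoid_add" and y :: "'c \<Rightarrow>\<^sub>0 'd::comm_monoid_add"
  assumes "\<And>k v k' v'. P (Poly_Mapping.single k v) (Poly_Mapping.single k' v')"
    and "\<And>x. P x 0" and "\<And>x y z. P x y \<Longrightarrow> P x z \<Longrightarrow> P x (y + z)"
    and "\<And>y. P 0 y" and "\<And>x y z. P x z \<Longrightarrow> P y z \<Longrightarrow> P (x + y) z"
  shows "P x y"
  by (induction x rule: poly_mapping_single_induct)
     (simp_all add: assms poly_mapping_single_induct[where P = "\<lambda>y. P (Poly_Mapping.single _ _) y"])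

lemma fa_mult_scal_left: "fa_mult (fa_scal c x) y = fa_scal c (fa_mult x y)"
  and fa_mult_scal_right: "fa_mult x (fa_scal c y) = fa_scal c (fa_mult x y)"
  by (induction x y rule: poly_mapping_single_induct2)
     (simp_all add: fa_scal_add fa_mult_add_left fa_mult_add_right algebra_simps)

lemma fa_mult_assoc: "fa_mult (fa_mult x y) z = fa_mult x (fa_mult y z)"
proof (induction x y rule: poly_mapping_single_induct2)
  case (1 k v k' v')
  show ?case
    by (induction z rule: poly_mapping_single_induct)
       (simp_all add: fa_mult_add_right mult.assoc)
qed (simp_all add: fa_mult_add_left fa_mult_add_right)

lemma fa_mult_one_left [simp]: "fa_mult fa_one x = x"
  and fa_mult_one_right [simp]: "fa_mult x fa_one = x"
  unfolding fa_one_def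
  by (induction x rule: poly_mapping_single_induct) (simp_all add: fa_mult_add_left fa_mult_add_right)

lemma fa_pow_0 [simp]: "fa_pow x 0 = fa_one"
  and fa_pow_Suc: "fa_pow x (Suc n) = fa_mult x (fa_pow x n)"
  by (simp_all add: fa_pow_def)

lemma fa_pow_Suc': "fa_pow x (Suc n) = fa_mult (fa_pow x n) x"
  by (induction n) (simp_all add: fa_pow_Suc fa_mult_assoc[symmetric])

lemma wimg_Nil [simp]: "wimg g [] = fa_one"
  and wimg_Cons: "wimg g (a # w) = fa_mult (g a) (wimg g w)"
  by (simp_all add: wimg_def)

lemma wimg_append: "wimg g (u @ w) = fa_mult (wimg g u) (wimg g w)"
  by (induction u) (simp_all add: wimg_Cons fa_mult_assoc)

section \<open>Semilinear extensions of maps on generators\<close>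

definition ring_endo :: "(K \<Rightarrow> K) \<Rightarrow> bool" where
  "ring_endo \<phi> \<longleftrightarrow>
     (\<forall>a b. \<phi> (a + b) = \<phi> a + \<phi> b) \<and> (\<forall>a b. \<phi> (a * b) = \<phi> a * \<phi> b) \<and> \<phi> 1 = 1"

lemma ring_endo_id: "ring_endo (\<lambda>c. c)"
  by (simp add: ring_endo_def)

lemma ring_endo_barK: "ring_endo barK"
  by (simp add: ring_endo_def barK_add barK_mult)

lemma ring_endo_0: "ring_endo \<phi> \<Longrightarrow> \<phi> 0 = 0"
  unfolding ring_endo_def by (metis add_cancel_right_right)

text \<open>
  A single notion covering \<^const>\<open>hom_ext\<close>, \<^const>\<open>antihom_ext\<close> and \<^const>\<open>barmap\<close>
  (\<open>rev_order\<close> selects anti-homomorphisms), so that composites of these maps are again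
  of the same form.
\<close>

definition semilin_ext :: "(K \<Rightarrow> K) \<Rightarrow> ('i \<times> int \<Rightarrow> 'i FA) \<Rightarrow> bool \<Rightarrow> 'i FA \<Rightarrow> 'i FA" where
  "semilin_ext \<phi> g rev_order x = (\<Sum>w\<in>Poly_Mapping.keys x.
     fa_scal (\<phi> (Poly_Mapping.lookup x w)) (wimg g (if rev_order then rev w else w)))"

lemma hom_ext_eq_semilin_ext: "hom_ext g = semilin_ext (\<lambda>c. c) g False"
  and antihom_ext_eq_semilin_ext: "antihom_ext g = semilin_ext (\<lambda>c. c) g True"
  and barmap_eq_semilin_ext: "barmap = semilin_ext barK (\<lambda>(j, p). gen j p) True"
  by (simp_all add: fun_eq_iff hom_ext_def antihom_ext_def barmap_def semilin_ext_def)

context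
  fixes \<phi> :: "K \<Rightarrow> K"
  assumes \<phi>: "ring_endo \<phi>"
begin

lemma semilin_ext_superset:
  assumes "finite A" "Poly_Mapping.keys x \<subseteq> A"
  shows "semilin_ext \<phi> g b x = (\<Sum>w\<in>A.
           fa_scal (\<phi> (Poly_Mapping.lookup x w)) (wimg g (if b then rev w else w)))"
  unfolding semilin_ext_def
  by (rule sum.mono_neutral_left) (use assms \<phi> in \<open>auto simp: in_keys_iff ring_endo_0\<close>)

lemma semilin_ext_zero [simp]: "semilin_ext \<phi> g b 0 = 0"
  by (simp add: semilin_ext_def)

lemma semilin_ext_add: "semilin_ext \<phi> g b (x + y) = semilin_ext \<phi> g b x + semilin_ext \<phi> g b y"
  using keys_add[of x y] \<phi>
  by (simp add: semilin_ext_superset[of "Poly_Mapping.keys x \<union> Poly_Mapping.keys y"]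
      lookup_add fa_scal_add_left sum.distrib ring_endo_def)

lemma semilin_ext_single:
  "semilin_ext \<phi> g b (Poly_Mapping.single w c) = fa_scal (\<phi> c) (wimg g (if b then rev w else w))"
  by (simp add: semilin_ext_superset[of "{w}"])

lemma semilin_ext_scal: "semilin_ext \<phi> g b (fa_scal c x) = fa_scal (\<phi> c) (semilin_ext \<phi> g b x)"
  using \<phi>
  by (induction x rule: poly_mapping_single_induct)
     (simp_all add: semilin_ext_add fa_scal_add semilin_ext_single ring_endo_def)

lemma semilin_ext_sum: "semilin_ext \<phi> g b (sum f A) = (\<Sum>a\<in>A. semilin_ext \<phi> g b (f a))"
  by (induction A rule: infinite_finite_induct) (simp_all add: semilin_ext_add)

lemma semilin_ext_mult:
  "semilin_ext \<phi> g b (fa_mult x y) =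
     (if b then fa_mult (semilin_ext \<phi> g b y) (semilin_ext \<phi> g b x)
      else fa_mult (semilin_ext \<phi> g b x) (semilin_ext \<phi> g b y))"
  using \<phi>
  by (induction x y rule: poly_mapping_single_induct2)
     (simp_all add: fa_mult_add_left fa_mult_add_right semilin_ext_add semilin_ext_single
       wimg_append fa_mult_scal_left fa_mult_scal_right ring_endo_def mult.commute)

lemma semilin_ext_one: "semilin_ext \<phi> g b fa_one = fa_one"
  using \<phi> by (simp add: fa_one_def semilin_ext_single ring_endo_def)

lemma semilin_ext_gen: "semilin_ext \<phi> g b (gen j p) = g (j, p)"
  using \<phi> by (simp add: gen_def semilin_ext_single ring_endo_def wimg_Cons)

lemma semilin_ext_pow: "semilin_ext \<phi> g b (fa_pow x n) = fa_pow (semilin_ext \<phi> g b x) n"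
  by (cases b; induction n)
     (simp_all add: semilin_ext_one semilin_ext_mult fa_pow_Suc fa_pow_Suc'[symmetric])

lemma semilin_ext_divpow:
  assumes "\<phi> (inverse (qfact d i n)) = inverse (qfact d i n)"
  shows "semilin_ext \<phi> g b (divpow d i x n) = divpow d i (semilin_ext \<phi> g b x) n"
  using assms by (simp add: divpow_def semilin_ext_scal semilin_ext_pow)

lemma semilin_ext_wimg:
  "semilin_ext \<phi> g b (wimg h w) = wimg (semilin_ext \<phi> g b \<circ> h) (if b then rev w else w)"
  by (cases b; induction w)
     (simp_all add: semilin_ext_one wimg_Cons semilin_ext_mult wimg_append)

lemma semilin_ext_semilin_ext:
  "semilin_ext \<phi> g b (semilin_ext \<psi> h b' x) = semilin_ext (\<phi> \<circ> \<psi>) (semilin_ext \<phi> g b \<circ> h) (b \<noteq> b') x"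
  unfolding semilin_ext_def[of \<psi>] semilin_ext_def[of "\<phi> \<circ> \<psi>"]
  by (cases b; cases b') (simp_all add: semilin_ext_sum semilin_ext_scal semilin_ext_wimg)

end

lemmas hom_ext_simps = semilin_ext_scal[OF ring_endo_id] semilin_ext_sum[OF ring_endo_id]
  semilin_ext_mult[OF ring_endo_id] semilin_ext_divpow[OF ring_endo_id] semilin_ext_gen[OF ring_endo_id]

section \<open>Symmetrizers of indecomposable Cartan matrices\<close>

lemma symmetrizer_proportional:
  fixes C :: "'i \<Rightarrow> 'i \<Rightarrow> int" and d d' :: "'i \<Rightarrow> nat"
  assumes pos: "\<forall>i. d i > 0"
    and sym: "\<forall>i j. int (d i) * C i j = int (d j) * C j i"
    and sym': "\<forall>i j. int (d' i) * C i j = int (d' j) * C j i"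
    and indecomposable: "\<forall>J. J \<noteq> {} \<and> J \<noteq> UNIV \<longrightarrow> (\<exists>i\<in>J. \<exists>j. j \<notin> J \<and> C i j \<noteq> 0)"
  shows "d' k * d i0 = d k * d' i0"
proof (rule ccontr)
  define J where "J = {k. d' k * d i0 = d k * d' i0}"
  assume "d' k * d i0 \<noteq> d k * d' i0"
  then have "J \<noteq> {}" "J \<noteq> UNIV"
    by (auto simp: J_def mult.commute)
  then obtain a b where a: "a \<in> J" and b: "b \<notin> J" and "C a b \<noteq> 0"
    using indecomposable by blast
  have "int (d a) * int (d' b) * C a b = int (d b) * int (d' b) * C b a"
    using sym by (metis mult.assoc mult.commute)
  moreover have "int (d' a) * int (d b) * C a b = int (d' b) * int (d b) * C b a"
    using sym' by (metis mult.assoc mult.commute)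
  ultimately have "int (d a) * int (d' b) = int (d' a) * int (d b)"
    using \<open>C a b \<noteq> 0\<close> by (metis mult.commute mult_right_cancel)
  then have "d a * d' b = d' a * d b"
    by (metis of_nat_eq_iff of_nat_mult)
  moreover have "d' a * d i0 = d a * d' i0"
    using a by (simp add: J_def)
  ultimately have "d a * (d' b * d i0) = d a * (d b * d' i0)"
    by (metis mult.assoc mult.commute)
  then have "d' b * d i0 = d b * d' i0"
    using pos by (metis mult_left_cancel not_gr0)
  with b show False
    by (simp add: J_def)
qed

lemma diagram_automorphism_preserves_symmetrizer:
  assumes "finite_type_cartan C d" "diagram_automorphism C \<sigma>"
  shows "d (\<sigma> k) = d k"
proof -
  from assms(1) have pos: "\<forall>i. d i > 0" and sym: "\<forall>i j. int (d i) * C i j = int (d j) * C j i"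
    and indecomposable: "\<forall>J. J \<noteq> {} \<and> J \<noteq> UNIV \<longrightarrow> (\<exists>i\<in>J. \<exists>j. j \<notin> J \<and> C i j \<noteq> 0)"
    and "\<exists>i. d i = 1"
    unfolding finite_type_cartan_def by blast+
  from assms(2) have "bij \<sigma>" and "\<forall>i j. C (\<sigma> i) (\<sigma> j) = C i j"
    unfolding diagram_automorphism_def by blast+
  then have sym_\<sigma>: "\<forall>i j. int (d (\<sigma> i)) * C i j = int (d (\<sigma> j)) * C j i"
    using sym by metis
  have proportional: "d (\<sigma> k') * d i0 = d k' * d (\<sigma> i0)" for k' i0
    using symmetrizer_proportional[OF pos sym sym_\<sigma> indecomposable] .
  obtain i0 where i0: "d i0 = 1"
    using \<open>\<exists>i. d i = 1\<close> by blast
  obtain i1 where "\<sigma> i1 = i0"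
    using \<open>bij \<sigma>\<close> by (metis bij_pointE)
  with proportional[of i1 i0] i0 have "d (\<sigma> i0) = 1"
    by simp
  with proportional[of k i0] i0 show ?thesis
    by simp
qed

section \<open>Compatibility of the braid symmetries with D, *, \<sigma> and bar\<close>

lemma Dmap_Tmap_commute: "Dmap (Tmap C d i x) = Tmap C d i (Dmap x)"
proof -
  have "Dmap \<circ> Tgen C d i = Tmap C d i \<circ> (\<lambda>(j, p). gen j (p + 1))"
    by (auto simp: Dmap_def Tmap_def hom_ext_eq_semilin_ext Tgen_def hom_ext_simps)
  then show ?thesis
    by (simp add: Dmap_def Tmap_def hom_ext_eq_semilin_ext semilin_ext_semilin_ext[OF ring_endo_id]
        o_def)
qed

lemma Tinvmap_eq_starmap_Tmap_starmap: "Tinvmap C d i x = starmap (Tmap C d i (starmap x))"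
proof -
  have "Tinvgen C d i = starmap \<circ> Tmap C d i \<circ> (\<lambda>(j, p). gen j (- p))"
    by (auto simp: starmap_def Tmap_def hom_ext_eq_semilin_ext antihom_ext_eq_semilin_ext
        Tgen_def Tinvgen_def hom_ext_simps fa_mult_assoc)
  then show ?thesis
    by (simp add: Tinvmap_def starmap_def Tmap_def hom_ext_eq_semilin_ext
        antihom_ext_eq_semilin_ext semilin_ext_semilin_ext[OF ring_endo_id] o_def)
qed

lemma sigmamap_Tmap:
  assumes "finite_type_cartan C d" "diagram_automorphism C \<sigma>"
  shows "sigmamap \<sigma> (Tmap C d i x) = Tmap C d (\<sigma> i) (sigmamap \<sigma> x)"
proof -
  have "d (\<sigma> i) = d i"
    by (rule diagram_automorphism_preserves_symmetrizer[OF assms])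
  then have "qi d (\<sigma> i) = qi d i" "kappa d (\<sigma> i) = kappa d i" "divpow d (\<sigma> i) = divpow d i"
    by (simp_all add: qi_def kappa_def divpow_def qfact_def qint_def fun_eq_iff)
  moreover have "inj \<sigma>" "\<And>a b. C (\<sigma> a) (\<sigma> b) = C a b"
    using assms(2) unfolding diagram_automorphism_def by (auto simp: bij_def)
  ultimately have "sigmamap \<sigma> \<circ> Tgen C d i = Tmap C d (\<sigma> i) \<circ> (\<lambda>(j, p). gen (\<sigma> j) p)"
    by (auto simp: sigmamap_def Tmap_def hom_ext_eq_semilin_ext Tgen_def hom_ext_simps inj_eq)
  then show ?thesis
    by (simp add: sigmamap_def Tmap_def hom_ext_eq_semilin_ext
        semilin_ext_semilin_ext[OF ring_endo_id] o_def)
qed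

lemma alternating_power_reflect:
  fixes q :: "'a :: field"
  assumes "q \<noteq> 0" "r \<le> n"
  shows "(-1) ^ n * q ^ n * ((-1) ^ (n - r) * inverse q ^ (n - r)) = (-1) ^ r * q ^ r"
proof -
  obtain k where n: "n = r + k"
    using assms(2) le_Suc_ex by blast
  have "(-1::'a) ^ n * (-1) ^ (n - r) = (-1) ^ r * ((-1) ^ k * (-1) ^ k)"
    by (simp add: n power_add mult_ac)
  also have "\<dots> = (-1) ^ r"
    by (simp add: power_add[symmetric] mult_2[symmetric])
  finally have "(-1::'a) ^ n * (-1) ^ (n - r) = (-1) ^ r" .
  moreover have "q ^ n * inverse q ^ (n - r) = q ^ r"
    using assms(1) by (simp add: n power_add power_inverse field_simps)
  ultimately show ?thesis
    by (metis mult.assoc mult.left_commute)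
qed

lemmas barmap_simps = semilin_ext_scal[OF ring_endo_barK] semilin_ext_sum[OF ring_endo_barK]
  semilin_ext_mult[OF ring_endo_barK] semilin_ext_gen[OF ring_endo_barK]
  semilin_ext_divpow[OF ring_endo_barK barK_inverse_qfact]

lemma barmap_Tgen: "barmap (Tgen C d i (j, p)) = Tgen C d i (j, p)"
proof (cases "C i j \<ge> 0")
  case True
  then show ?thesis by (simp add: Tgen_def barmap_eq_semilin_ext barmap_simps)
next
  case False
  define n where "n = nat (- C i j)"
  define q where "q = qi d i"
  define K where "K = kappa d i powi C i j"
  define M where "M r = fa_mult (divpow d i (gen i p) (n - r))
                          (fa_mult (gen j p) (divpow d i (gen i p) r))" for r
  have C_eq: "C i j = - int n"
    using False by (simp add: n_def)
  have Tgen_eq: "Tgen C d i (j, p) = fa_scal K (\<Sum>r\<in>{0..n}. fa_scal ((-1) ^ r * q ^ r) (M r))"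
    using False by (simp add: Tgen_def n_def M_def K_def q_def)
  have "barmap (Tgen C d i (j, p)) =
      fa_scal (barK K) (\<Sum>r\<in>{0..n}. fa_scal ((-1) ^ r * inverse q ^ r) (M (n - r)))"
    unfolding Tgen_eq barmap_eq_semilin_ext
    by (simp add: barmap_simps M_def barK_mult barK_power barK_minus barK_qi q_def fa_mult_assoc)
  also have "(\<Sum>r\<in>{0..n}. fa_scal ((-1) ^ r * inverse q ^ r) (M (n - r)))
      = (\<Sum>r\<in>{0..n}. fa_scal ((-1) ^ (n - r) * inverse q ^ (n - r)) (M r))"
    by (subst sum.atLeastAtMost_rev) (intro sum.cong refl, simp)
  also have "fa_scal (barK K) \<dots> = fa_scal K (\<Sum>r\<in>{0..n}. fa_scal ((-1) ^ r * q ^ r) (M r))"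
    unfolding fa_scal_sum fa_scal_scal
  proof (intro sum.cong refl arg_cong2[where f = fa_scal])
    fix r assume "r \<in> {0..n}"
    then show "barK K * ((-1) ^ (n - r) * inverse q ^ (n - r)) = K * ((-1) ^ r * q ^ r)"
      using alternating_power_reflect[of q r n] qi_nonzero[of d i]
      unfolding K_def C_eq barK_kappa_power_neg q_def by (simp add: mult_ac)
  qed
  finally show ?thesis
    using Tgen_eq by simp
qed

lemma Tmap_barmap_commute: "Tmap C d i (barmap x) = barmap (Tmap C d i x)"
proof -
  have "Tmap C d i \<circ> (\<lambda>(j, p). gen j p) = barmap \<circ> Tgen C d i"
    by (auto simp: fun_eq_iff Tmap_def hom_ext_eq_semilin_ext semilin_ext_gen[OF ring_endo_id]
        barmap_Tgen)
  then show ?thesis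
    by (simp add: barmap_eq_semilin_ext Tmap_def hom_ext_eq_semilin_ext
        semilin_ext_semilin_ext[OF ring_endo_id] semilin_ext_semilin_ext[OF ring_endo_barK] o_def)
qed

lemma bos_eq_refl: "bos_eq C d x x"
  by (simp add: bos_eq_def fa_ideal.zero_in)

theorem lemma4p1:
  fixes C :: "'i::finite \<Rightarrow> 'i \<Rightarrow> int" and d :: "'i \<Rightarrow> nat" and i :: 'i
  assumes "finite_type_cartan C d"
  shows "(\<forall>x. bos_eq C d (Dmap (Tmap C d i x)) (Tmap C d i (Dmap x)))
       \<and> (\<forall>x. bos_eq C d (Tinvmap C d i x) (starmap (Tmap C d i (starmap x))))
       \<and> (\<forall>\<sigma> x. diagram_automorphism C \<sigma> \<longrightarrow>
              bos_eq C d (sigmamap \<sigma> (Tmap C d i x)) (Tmap C d (\<sigma> i) (sigmamap \<sigma> x)))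
       \<and> (\<forall>x. bos_eq C d (Tmap C d i (barmap x)) (barmap (Tmap C d i x)))"
  using sigmamap_Tmap[OF assms]
  by (simp add: bos_eq_refl Dmap_Tmap_commute Tinvmap_eq_starmap_Tmap_starmap Tmap_barmap_commute)

end
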